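(* Let $N\ge 2$, $\Omega>0$ and $F=2\Omega\,\mathrm i\,T^N_{10}$. Let $W\in C^1([0,\infty),\mathfrak{su}(N))$ be a solution of \[\dot W=[\Delta_N^{-1}(W-F),W]_N .\] Then $\widetilde W(t):=\exp\!\left(-\tfrac12 N^{3/2}F t\right)W(t)\exp\!\left(\tfrac12 N^{3/2}F t\right)$ is a solution of \[\dot{\widetilde W}=[\Delta_N^{-1}\widetilde W,\widetilde W]_N,\qquad \widetilde W(0)=W(0).\]
   Context: $\mathfrak{su}(N)$ is the Lie algebra of traceless skew-Hermitian $N\times N$ complex matrices; $\exp$ is the matrix exponential. The bracket is $[A,B]_N=N^{3/2}(AB-BA)$. Let $s=(N-1)/2$ and index rows and columns by $m_1,m_2\in\{-s,-s+1,\dots,s\}$. For $l=1,\dots,N-1$ and $m=-l,\dots,l$ define $(T^N_{lm})_{m_1m_2}=(-1)^{s-m_1}\sqrt{2l+1}\begin{pmatrix} s & l & s\\ -m_1 & m & m_2\end{pmatrix}$ (Wigner 3j-symbol); these form an orthonormal basis of $\mathfrak{sl}(N,\mathbb C)$ for the Frobenius inner product. $\Delta_N^{-1}$ is the complex-linear map on $\mathfrak{sl}(N,\mathbb C)$ defined by $\Delta_N^{-1}T^N_{lm}=-\frac{1}{l(l+1)}T^N_{lm}$. *)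

theory Defs
  imports "HOL-Analysis.Analysis" "Jordan_Normal_Form.Matrix"
begin

definition hf :: "int \<Rightarrow> real" where
  "hf x = fact (nat (x div 2))"

text \<open>Wigner 3j-symbol via the Racah formula. All six arguments are DOUBLED:
  w3j a1 a2 a3 b1 b2 b3 is the symbol with j_i = a_i/2 and m_i = b_i/2.
  It is zero unless the selection rules hold.\<close>
definition w3j :: "int \<Rightarrow> int \<Rightarrow> int \<Rightarrow> int \<Rightarrow> int \<Rightarrow> int \<Rightarrow> real" where
  "w3j j1 j2 j3 m1 m2 m3 =
    (if 0 \<le> j1 \<and> 0 \<le> j2 \<and> 0 \<le> j3 \<and> m1 + m2 + m3 = 0
        \<and> \<bar>m1\<bar> \<le> j1 \<and> \<bar>m2\<bar> \<le> j2 \<and> \<bar>m3\<bar> \<le> j3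
        \<and> even (j1 + m1) \<and> even (j2 + m2) \<and> even (j3 + m3)
        \<and> j3 \<le> j1 + j2 \<and> j1 \<le> j2 + j3 \<and> j2 \<le> j1 + j3 \<and> even (j1 + j2 + j3)
     then (-1) powi ((j1 - j2 - m3) div 2)
        * sqrt (hf (j1 + j2 - j3) * hf (j1 - j2 + j3) * hf (- j1 + j2 + j3) / hf (j1 + j2 + j3 + 2))
        * sqrt (hf (j1 - m1) * hf (j1 + m1) * hf (j2 - m2) * hf (j2 + m2) * hf (j3 - m3) * hf (j3 + m3))
        * (\<Sum>k\<in>{k::int. 0 \<le> k \<and> 0 \<le> j3 - j2 + 2*k + m1 \<and> 0 \<le> j3 - j1 + 2*k - m2
                  \<and> 0 \<le> j1 + j2 - j3 - 2*k \<and> 0 \<le> j1 - 2*k - m1 \<and> 0 \<le> j2 - 2*k + m2}.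
             (-1) powi k / (fact (nat k) * hf (j3 - j2 + 2*k + m1) * hf (j3 - j1 + 2*k - m2)
                 * hf (j1 + j2 - j3 - 2*k) * hf (j1 - 2*k - m1) * hf (j2 - 2*k + m2)))
     else 0)"

text \<open>The matrices T^N_{lm}. Row/column index i \<in> {0..N-1} corresponds to
  m_1 = i - s, s = (N-1)/2 (increasing order). In doubled units 2 s = N-1,
  2 m_1 = 2 i - (N-1), and s - m_1 = N - 1 - i.\<close>
definition Tmat :: "nat \<Rightarrow> nat \<Rightarrow> int \<Rightarrow> complex mat" where
  "Tmat N l m = mat N N (\<lambda>(i, j). complex_of_real
      ((-1) ^ (N - 1 - i) * sqrt (2 * real l + 1)
       * w3j (int N - 1) (2 * int l) (int N - 1)
             (int N - 1 - 2 * int i) (2 * m) (2 * int j - (int N - 1))))"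

definition ctrans :: "complex mat \<Rightarrow> complex mat" where
  "ctrans A = mat (dim_col A) (dim_row A) (\<lambda>(i, j). cnj (A $$ (j, i)))"

definition mtrace :: "complex mat \<Rightarrow> complex" where
  "mtrace A = (\<Sum>i<dim_row A. A $$ (i, i))"

definition frob :: "complex mat \<Rightarrow> complex mat \<Rightarrow> complex" where
  "frob A B = mtrace (ctrans A * B)"

definition su :: "nat \<Rightarrow> complex mat set" where
  "su N = {A. A \<in> carrier_mat N N \<and> ctrans A = - A \<and> mtrace A = 0}"

definition brk :: "nat \<Rightarrow> complex mat \<Rightarrow> complex mat \<Rightarrow> complex mat" where
  "brk N A B = complex_of_real (real N powr (3/2)) \<cdot>\<^sub>m (A * B - B * A)"

text \<open>Delta_N^{-1}: the complex-linear map with Delta_N^{-1} T_{lm} = -T_{lm}/(l(l+1)),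
  written out (entrywise) in the orthonormal basis T_{lm} of sl(N,C): coefficient of A is frob T_{lm} A.\<close>
definition lapinv :: "nat \<Rightarrow> complex mat \<Rightarrow> complex mat" where
  "lapinv N A = mat N N (\<lambda>(i, j). \<Sum>l\<in>{1..N-1}. \<Sum>m\<in>{-int l..int l}.
      (- complex_of_real (1 / (real l * (real l + 1))) * frob (Tmat N l m) A) * Tmat N l m $$ (i, j))"

definition mexp :: "nat \<Rightarrow> complex mat \<Rightarrow> complex mat" where
  "mexp N A = mat N N (\<lambda>(i, j). (\<Sum>k. (A ^\<^sub>m k) $$ (i, j) / of_nat (fact k)))"

definition C1_solution :: "nat \<Rightarrow> (complex mat \<Rightarrow> complex mat) \<Rightarrow> (real \<Rightarrow> complex mat) \<Rightarrow> bool" where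
  "C1_solution N rhs W \<longleftrightarrow>
     (\<forall>t\<ge>0. W t \<in> su N) \<and>
     (\<exists>W'. (\<forall>t\<ge>0. W' t \<in> carrier_mat N N) \<and>
       (\<forall>i<N. \<forall>j<N. \<forall>t\<ge>0.
          ((\<lambda>s. W s $$ (i, j)) has_vector_derivative (W' t $$ (i, j))) (at t within {0..})) \<and>
       (\<forall>i<N. \<forall>j<N. continuous_on {0..} (\<lambda>t. W' t $$ (i, j))) \<and>
       (\<forall>t\<ge>0. W' t = rhs (W t)))"

end

(* F = 2 \<Omega> i T_{10} is diagonal with entries in arithmetic progression (T_{10} is a multiple of
   diag(2i - (N-1))), so conjugation by exp(sF) multiplies the (i,j) entry of a matrix by a phase
   that depends only on j - i.  Every T_{lm} is supported on the diagonal j = i - m, hence this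
   conjugation commutes with Delta_N^{-1}, and it commutes with the bracket.  Evaluating Racah's
   formula on the diagonal of T_{l0} and a discrete orthogonality relation for the resulting
   polynomials give <T_{lm}, T_{10}> = delta_{l1} delta_{m0}, so Delta_N^{-1} F = -F/2 and the
   equation for W reads dW/dt = [Delta_N^{-1} W, W]_N + 1/2 [F, W]_N.  Differentiating the
   conjugated solution produces an extra term -1/2 [F, W]_N, which cancels the second one. *)

theory Submission
  imports Defs
begin

section \<open>Binomial sums and Racah's polynomial\<close>

lemma sum_choose_mult_choose_diff:
  "(\<Sum>i\<le>n. (i choose a) * ((n - i) choose b)) = Suc n choose (a + b + 1)"
proof (induction n arbitrary: b)
  case 0
  then show ?case by (cases a; cases b; simp)
next
  case (Suc n)
  show ?case
  proof (cases b)
    case 0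
    then show ?thesis using sum_choose_upper[of a "Suc n"] by simp
  next
    case (Suc c)
    have "(\<Sum>i\<le>Suc n. (i choose a) * ((Suc n - i) choose b))
        = (\<Sum>i\<le>n. (i choose a) * ((n - i) choose b) + (i choose a) * ((n - i) choose c))"
      using Suc by (simp add: Suc_diff_le algebra_simps)
    also have "\<dots> = (Suc n choose (a + b + 1)) + (Suc n choose (a + c + 1))"
      by (simp add: sum.distrib Suc.IH)
    also have "\<dots> = Suc (Suc n) choose (a + b + 1)"
      using Suc by simp
    finally show ?thesis .
  qed
qed

lemma mult_choose_eq_Suc_choose:
  "i * (i choose k) = Suc k * (i choose Suc k) + k * (i choose k)"
proof (cases "k \<le> i")
  case True
  have "(i - k) * (i choose k) = Suc k * (i choose Suc k)"
    using True binomial_absorb_comp[of i k] Suc_times_binomial[of k "i - 1"]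
    by (cases i) simp_all
  then show ?thesis
    using True by (metis add_mult_distrib le_add_diff_inverse2)
qed (simp add: binomial_eq_0)

text \<open>\<open>i! (n - i)! l!\<close> times Racah's sum for the 3j-symbol \<open>(s l s; -m 0 m)\<close>,
  where \<open>n = 2s\<close> and \<open>i = s + m\<close>.\<close>
definition racah_poly :: "nat \<Rightarrow> nat \<Rightarrow> nat \<Rightarrow> int" where
  "racah_poly n l i =
     (\<Sum>k\<le>l. (-1)^k * int (l choose k) * int (i choose k) * int ((n - i) choose (l - k)))"

lemma racah_poly_1: "i \<le> n \<Longrightarrow> racah_poly n 1 i = int n - 2 * int i"
  unfolding racah_poly_def by (simp add: atMost_Suc)

lemma sum_choose_choose_centered:
  assumes "k \<le> l"
  shows "(\<Sum>i\<le>n. int (i choose k) * int ((n - i) choose (l - k)) * (2 * int i - int n))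
     = 2 * (int (Suc k) * int (Suc n choose (l + 2)) + int k * int (Suc n choose (l + 1)))
       - int n * int (Suc n choose (l + 1))"
proof -
  have vandermonde: "(\<Sum>i\<le>n. (i choose k) * ((n - i) choose (l - k))) = Suc n choose (l + 1)"
    using sum_choose_mult_choose_diff[where n=n and a=k and b="l - k"] assms by simp
  have vandermonde_Suc: "(\<Sum>i\<le>n. (i choose Suc k) * ((n - i) choose (l - k))) = Suc n choose (l + 2)"
    using sum_choose_mult_choose_diff[where n=n and a="Suc k" and b="l - k"] assms by simp
  have "(\<Sum>i\<le>n. i * (i choose k) * ((n - i) choose (l - k)))
      = (\<Sum>i\<le>n. Suc k * ((i choose Suc k) * ((n - i) choose (l - k)))
               + k * ((i choose k) * ((n - i) choose (l - k))))"
    by (rule sum.cong) (auto simp: mult_choose_eq_Suc_choose algebra_simps)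
  also have "\<dots> = Suc k * (Suc n choose (l + 2)) + k * (Suc n choose (l + 1))"
    by (simp add: sum.distrib sum_distrib_left[symmetric] vandermonde vandermonde_Suc)
  finally have first_moment: "(\<Sum>i\<le>n. i * (i choose k) * ((n - i) choose (l - k)))
      = Suc k * (Suc n choose (l + 2)) + k * (Suc n choose (l + 1))" .
  have "(\<Sum>i\<le>n. int (i choose k) * int ((n - i) choose (l - k)) * (2 * int i - int n))
      = 2 * int (\<Sum>i\<le>n. i * (i choose k) * ((n - i) choose (l - k)))
        - int n * int (\<Sum>i\<le>n. (i choose k) * ((n - i) choose (l - k)))"
    by (simp add: of_nat_sum sum_distrib_left sum_subtractf[symmetric] algebra_simps)
  then show ?thesis
    unfolding vandermonde first_moment by (simp only: of_nat_add of_nat_mult)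
qed

lemma racah_poly_orthogonal_linear:
  assumes "2 \<le> l"
  shows "(\<Sum>i\<le>n. racah_poly n l i * (2 * int i - int n)) = 0"
proof -
  define A where "A = int (Suc n choose (l + 2))"
  define B where "B = int (Suc n choose (l + 1))"
  have "(\<Sum>i\<le>n. racah_poly n l i * (2 * int i - int n))
     = (\<Sum>k\<le>l. (-1)^k * int (l choose k) *
          (\<Sum>i\<le>n. int (i choose k) * int ((n - i) choose (l - k)) * (2 * int i - int n)))"
    unfolding racah_poly_def
    by (simp add: sum_distrib_left sum_distrib_right sum.swap[of _ "{..n}"] algebra_simps)
  also have "\<dots> = (\<Sum>k\<le>l. (-1)^k * int (l choose k) * (2 * (int (Suc k) * A + int k * B) - int n * B))"
    by (rule sum.cong) (auto simp: sum_choose_choose_centered A_def B_def)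
  also have "\<dots> = (2 * A - int n * B) * (\<Sum>k\<le>l. (-1)^k * int (l choose k))
       + (2 * A + 2 * B) * (\<Sum>k\<le>l. (-1)^k * int k * int (l choose k))"
    by (simp add: sum_distrib_left sum.distrib[symmetric] algebra_simps)
  also have "\<dots> = 0"
    using choose_alternating_sum[of l, where 'a=int] choose_alternating_linear_sum[of l, where 'a=int] assms
    by simp
  finally show ?thesis .
qed

lemma sum_centered_square:
  "3 * (\<Sum>i\<le>n. (2 * int i - int n)^2) = int n * (int n + 1) * (int n + 2)"
proof -
  have squares: "6 * (\<Sum>i\<le>n. int i ^ 2) = int n * (int n + 1) * (2 * int n + 1)"
    by (induction n) (auto simp: power2_eq_square algebra_simps)
  have linear: "2 * (\<Sum>i\<le>n. int i) = int n * (int n + 1)"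
    by (induction n) (auto simp: algebra_simps)
  have "3 * (\<Sum>i\<le>n. (2 * int i - int n)^2)
      = 2 * (6 * (\<Sum>i\<le>n. int i ^ 2)) - 6 * int n * (2 * (\<Sum>i\<le>n. int i))
        + 3 * (int n + 1) * int n ^ 2"
    by (simp add: power2_eq_square sum_subtractf sum.distrib sum_distrib_left sum_distrib_right
        algebra_simps)
  also have "\<dots> = int n * (int n + 1) * (int n + 2)"
    unfolding squares linear by (simp add: power2_eq_square algebra_simps)
  finally show ?thesis .
qed

section \<open>Diagonal matrices and diagonal conjugation\<close>

definition diagm :: "nat \<Rightarrow> (nat \<Rightarrow> 'a::zero) \<Rightarrow> 'a mat" where
  "diagm N d = mat N N (\<lambda>(i, j). if i = j then d i else 0)"

definition diag_conj :: "nat \<Rightarrow> (nat \<Rightarrow> 'a::times) \<Rightarrow> (nat \<Rightarrow> 'a) \<Rightarrow> 'a mat \<Rightarrow> 'a mat" where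
  "diag_conj N v u A = mat N N (\<lambda>(i, j). v i * A $$ (i, j) * u j)"

lemma diagm_carrier [simp]: "diagm N d \<in> carrier_mat N N"
  and dim_row_diagm [simp]: "dim_row (diagm N d) = N"
  and dim_col_diagm [simp]: "dim_col (diagm N d) = N"
  and index_diagm [simp]: "i < N \<Longrightarrow> j < N \<Longrightarrow> diagm N d $$ (i, j) = (if i = j then d i else 0)"
  unfolding diagm_def by simp_all

lemma diag_conj_carrier [simp]: "diag_conj N v u A \<in> carrier_mat N N"
  and dim_row_diag_conj [simp]: "dim_row (diag_conj N v u A) = N"
  and dim_col_diag_conj [simp]: "dim_col (diag_conj N v u A) = N"
  and index_diag_conj [simp]: "i < N \<Longrightarrow> j < N \<Longrightarrow> diag_conj N v u A $$ (i, j) = v i * A $$ (i, j) * u j"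
  unfolding diag_conj_def by simp_all

lemma index_diagm_mult:
  fixes d :: "nat \<Rightarrow> 'a::semiring_0"
  assumes "A \<in> carrier_mat N n" "i < N" "j < n"
  shows "(diagm N d * A) $$ (i, j) = d i * A $$ (i, j)"
proof -
  have "(\<Sum>p = 0..<N. (if i = p then d i else 0) * A $$ (p, j)) = d i * A $$ (i, j)"
    using assms(2) by (simp add: if_distrib[of "\<lambda>x. x * _"] cong: if_cong)
  then show ?thesis using assms by (simp add: scalar_prod_def)
qed

lemma index_mult_diagm:
  fixes d :: "nat \<Rightarrow> 'a::semiring_0"
  assumes "A \<in> carrier_mat n N" "i < n" "j < N"
  shows "(A * diagm N d) $$ (i, j) = A $$ (i, j) * d j"
proof -
  have "(\<Sum>p = 0..<N. A $$ (i, p) * (if p = j then d p else 0)) = A $$ (i, j) * d j"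
    using assms(3) by (simp add: if_distrib[of "\<lambda>x. _ * x"] cong: if_cong)
  then show ?thesis using assms by (simp add: scalar_prod_def)
qed

lemma smult_diagm: "c \<cdot>\<^sub>m diagm N d = diagm N (\<lambda>i. c * (d i :: 'a::mult_zero))"
  by (rule eq_matI) auto

lemma diagm_mult_diagm: "diagm N a * diagm N b = diagm N (\<lambda>i. (a i :: 'a::semiring_0) * b i)"
proof (rule eq_matI)
  fix i j assume "i < dim_row (diagm N (\<lambda>i. a i * b i))" "j < dim_col (diagm N (\<lambda>i. a i * b i))"
  then show "(diagm N a * diagm N b) $$ (i, j) = diagm N (\<lambda>i. a i * b i) $$ (i, j)"
    by (subst index_mult_diagm) auto
qed auto

lemma diagm_pow: "diagm N d ^\<^sub>m k = diagm N (\<lambda>i. (d i :: 'a::semiring_1) ^ k)"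
  by (induction k) (auto intro!: eq_matI simp: diagm_mult_diagm power_commutes)

lemma mexp_diagm: "mexp N (diagm N d) = diagm N (\<lambda>i. exp (d i))"
proof -
  have "(\<Sum>k. x ^ k / of_nat (fact k)) = exp x" for x :: complex
    using sums_unique[OF exp_converges[of x]] by (simp add: scaleR_conv_of_real field_simps)
  then show ?thesis
    unfolding mexp_def diagm_pow by (auto intro!: eq_matI)
qed

lemma mexp_smult_diagm: "mexp N (c \<cdot>\<^sub>m diagm N d) = diagm N (\<lambda>i. exp (c * d i))"
  by (simp add: smult_diagm mexp_diagm)

lemma diagm_mult_mult_diagm:
  fixes v u :: "nat \<Rightarrow> 'a::comm_semiring_1"
  assumes "A \<in> carrier_mat N N"
  shows "diagm N v * A * diagm N u = diag_conj N v u A"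
proof (rule eq_matI)
  fix i j assume "i < dim_row (diag_conj N v u A)" "j < dim_col (diag_conj N v u A)"
  then have ij: "i < N" "j < N" by simp_all
  have "(diagm N v * A * diagm N u) $$ (i, j) = (diagm N v * A) $$ (i, j) * u j"
    by (rule index_mult_diagm) (use assms ij in auto)
  then show "(diagm N v * A * diagm N u) $$ (i, j) = diag_conj N v u A $$ (i, j)"
    using index_diagm_mult[OF assms ij] ij by simp
qed (use assms in auto)

lemma diag_conj_mult:
  fixes v u :: "nat \<Rightarrow> 'a::comm_semiring_1"
  assumes "X \<in> carrier_mat N N" "Y \<in> carrier_mat N N" and uv: "\<And>i. i < N \<Longrightarrow> u i * v i = 1"
  shows "diag_conj N v u (X * Y) = diag_conj N v u X * diag_conj N v u Y"
proof (rule eq_matI)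
  fix i j assume ij: "i < dim_row (diag_conj N v u X * diag_conj N v u Y)"
    "j < dim_col (diag_conj N v u X * diag_conj N v u Y)"
  have "v i * X $$ (i, p) * u p * (v p * Y $$ (p, j) * u j)
      = (u p * v p) * (v i * (X $$ (i, p) * Y $$ (p, j)) * u j)" for p
    by (simp add: algebra_simps)
  then have "(\<Sum>p = 0..<N. v i * X $$ (i, p) * u p * (v p * Y $$ (p, j) * u j))
      = (\<Sum>p = 0..<N. v i * (X $$ (i, p) * Y $$ (p, j)) * u j)"
    by (intro sum.cong) (simp_all add: uv)
  then show "diag_conj N v u (X * Y) $$ (i, j) = (diag_conj N v u X * diag_conj N v u Y) $$ (i, j)"
    using ij assms by (simp add: scalar_prod_def sum_distrib_left sum_distrib_right)
qed auto

lemma diag_conj_minus: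
  fixes v u :: "nat \<Rightarrow> 'a::comm_ring"
  assumes "X \<in> carrier_mat N N" "Y \<in> carrier_mat N N"
  shows "diag_conj N v u (X - Y) = diag_conj N v u X - diag_conj N v u Y"
  by (rule eq_matI) (use assms in \<open>auto simp: algebra_simps\<close>)

lemma diag_conj_smult:
  fixes v u :: "nat \<Rightarrow> 'a::comm_semiring"
  assumes "X \<in> carrier_mat N N"
  shows "diag_conj N v u (a \<cdot>\<^sub>m X) = a \<cdot>\<^sub>m diag_conj N v u X"
  by (rule eq_matI) (use assms in \<open>auto simp: algebra_simps\<close>)

lemma diag_conj_su:
  assumes "A \<in> su N" and uv: "\<And>i. i < N \<Longrightarrow> u i * v i = 1"
    and cnj_v: "\<And>i. i < N \<Longrightarrow> cnj (v i) = u i"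
  shows "diag_conj N v u A \<in> su N"
proof -
  have A: "A \<in> carrier_mat N N" "ctrans A = - A" "mtrace A = 0"
    using assms(1) unfolding su_def by auto
  have skew: "cnj (A $$ (j, i)) = - A $$ (i, j)" if "i < N" "j < N" for i j
    using arg_cong[OF A(2), of "\<lambda>B. B $$ (i, j)"] that A(1) unfolding ctrans_def by simp
  have cnj_u: "cnj (u i) = v i" if "i < N" for i
    using cnj_v[OF that] by (metis complex_cnj_cnj)
  have "ctrans (diag_conj N v u A) = - diag_conj N v u A"
    by (rule eq_matI) (auto simp: ctrans_def skew cnj_v cnj_u)
  moreover have "mtrace (diag_conj N v u A) = mtrace A"
    unfolding mtrace_def using A(1) by (auto intro!: sum.cong simp: uv[symmetric] mult_ac)
  ultimately show ?thesis
    using A unfolding su_def by simp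
qed

lemma dim_row_brk [simp]: "dim_row (brk N X Y) = dim_row Y"
  and dim_col_brk [simp]: "dim_col (brk N X Y) = dim_col X"
  unfolding brk_def by simp_all

lemma diag_conj_brk:
  assumes "X \<in> carrier_mat N N" "Y \<in> carrier_mat N N" "\<And>i. i < N \<Longrightarrow> u i * v i = 1"
  shows "diag_conj N v u (brk N X Y) = brk N (diag_conj N v u X) (diag_conj N v u Y)"
proof -
  have XY: "X * Y \<in> carrier_mat N N" "Y * X \<in> carrier_mat N N" "X * Y - Y * X \<in> carrier_mat N N"
    using assms by auto
  show ?thesis
    unfolding brk_def diag_conj_smult[OF XY(3)] diag_conj_minus[OF XY(1,2)]
    using assms by (simp add: diag_conj_mult[of X N Y] diag_conj_mult[of Y N X])
qed

lemma brk_minus_left: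
  assumes "X \<in> carrier_mat N N" "Y \<in> carrier_mat N N" "Z \<in> carrier_mat N N"
  shows "brk N (X - Y) Z = brk N X Z - brk N Y Z"
  by (rule eq_matI) (use assms in \<open>auto simp: brk_def algebra_simps\<close>)

lemma index_brk_diagm:
  assumes "A \<in> carrier_mat N N" "i < N" "j < N"
  shows "brk N (diagm N d) A $$ (i, j) = complex_of_real (real N powr (3/2)) * (d i - d j) * A $$ (i, j)"
proof -
  have "(diagm N d * A) $$ (i, j) = d i * A $$ (i, j)" "(A * diagm N d) $$ (i, j) = A $$ (i, j) * d j"
    using assms by (simp_all only: index_diagm_mult index_mult_diagm)
  then show ?thesis
    using assms by (simp add: brk_def algebra_simps)
qed

section \<open>The diagonal of T_l0\<close>

lemma hf_double [simp]: "hf (2 * x) = fact (nat x)"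
  unfolding hf_def by simp

lemma factorial_sum_eq_racah_poly:
  fixes n l i :: nat
  assumes "i \<le> n"
  shows "fact i * fact (n - i) * fact l *
      (\<Sum>k | k \<le> l \<and> k \<le> i \<and> l + i \<le> n + k. (-1)^k /
         (fact k * fact (n + k - (l + i)) * fact k * fact (l - k) * fact (i - k) * fact (l - k)))
    = (real_of_int (racah_poly n l i) :: real)"
proof -
  define K where "K = {k. k \<le> l \<and> k \<le> i \<and> l + i \<le> n + k}"
  have summand: "fact i * fact (n - i) * fact l * ((-1)^k /
         (fact k * fact (n + k - (l + i)) * fact k * fact (l - k) * fact (i - k) * fact (l - k)))
      = (-1)^k * real (l choose k) * real (i choose k) * real ((n - i) choose (l - k))"
    if "k \<in> K" for k
  proof -
    have "k \<le> l" "k \<le> i" "l - k \<le> n - i" "n - i - (l - k) = n + k - (l + i)"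
      using that unfolding K_def by auto
    then show ?thesis
      by (simp add: binomial_fact field_simps)
  qed
  have "fact i * fact (n - i) * fact l *
      (\<Sum>k\<in>K. (-1)^k /
         (fact k * fact (n + k - (l + i)) * fact k * fact (l - k) * fact (i - k) * fact (l - k)))
    = (\<Sum>k\<in>K. (-1)^k * real (l choose k) * real (i choose k) * real ((n - i) choose (l - k)))"
    unfolding sum_distrib_left by (intro sum.cong refl summand)
  also have "\<dots> = (\<Sum>k\<le>l. (-1)^k * real (l choose k) * real (i choose k) * real ((n - i) choose (l - k)))"
  proof (rule sum.mono_neutral_left)
    show "\<forall>k\<in>{..l} - K. (-1)^k * real (l choose k) * real (i choose k) * real ((n - i) choose (l - k)) = 0"
      using assms by (auto simp: K_def binomial_eq_0)
  qed (auto simp: K_def)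
  finally show ?thesis
    unfolding K_def racah_poly_def by simp
qed

definition racah_sum :: "int \<Rightarrow> int \<Rightarrow> int \<Rightarrow> int \<Rightarrow> int \<Rightarrow> real" where
  "racah_sum j1 j2 j3 m1 m2 =
    (\<Sum>k\<in>{k::int. 0 \<le> k \<and> 0 \<le> j3 - j2 + 2*k + m1 \<and> 0 \<le> j3 - j1 + 2*k - m2
                  \<and> 0 \<le> j1 + j2 - j3 - 2*k \<and> 0 \<le> j1 - 2*k - m1 \<and> 0 \<le> j2 - 2*k + m2}.
       (-1) powi k / (fact (nat k) * hf (j3 - j2 + 2*k + m1) * hf (j3 - j1 + 2*k - m2)
         * hf (j1 + j2 - j3 - 2*k) * hf (j1 - 2*k - m1) * hf (j2 - 2*k + m2)))"

lemma racah_sum_diagonal: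
  fixes n l i :: nat
  assumes "l \<le> n" "i \<le> n"
  shows "fact i * fact (n - i) * fact l * racah_sum (int n) (2 * int l) (int n) (int n - 2 * int i) 0
    = real_of_int (racah_poly n l i)"
proof -
  define j1 j2 j3 m1 m2 where "j1 = int n" and "j2 = 2 * int l" and "j3 = int n"
    and "m1 = int n - 2 * int i" and "m2 = (0::int)"
  note defs = j1_def j2_def j3_def m1_def m2_def
  define K where "K = {k::int. 0 \<le> k \<and> 0 \<le> j3 - j2 + 2*k + m1 \<and> 0 \<le> j3 - j1 + 2*k - m2
                  \<and> 0 \<le> j1 + j2 - j3 - 2*k \<and> 0 \<le> j1 - 2*k - m1 \<and> 0 \<le> j2 - 2*k + m2}"
  define summand where "summand k = (-1) powi k / (fact (nat k) * hf (j3 - j2 + 2*k + m1)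
     * hf (j3 - j1 + 2*k - m2) * hf (j1 + j2 - j3 - 2*k) * hf (j1 - 2*k - m1) * hf (j2 - 2*k + m2))"
    for k
  define K' where "K' = {k. k \<le> l \<and> k \<le> i \<and> l + i \<le> n + k}"
  have "K = int ` K'"
  proof (intro equalityI subsetI)
    fix k assume "k \<in> K"
    then show "k \<in> int ` K'"
      using assms unfolding K_def K'_def defs by (intro image_eqI[of _ _ "nat k"]) auto
  qed (use assms in \<open>auto simp: K_def K'_def defs\<close>)
  then have "racah_sum j1 j2 j3 m1 m2 = (\<Sum>k\<in>K'. summand (int k))"
    unfolding racah_sum_def K_def[symmetric] summand_def[symmetric] by (simp add: sum.reindex)
  also have "\<dots> = (\<Sum>k\<in>K'. (-1)^k /
      (fact k * fact (n + k - (l + i)) * fact k * fact (l - k) * fact (i - k) * fact (l - k)))"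
  proof (intro sum.cong refl)
    fix k assume "k \<in> K'"
    then have "j3 - j2 + 2 * int k + m1 = 2 * int (n + k - (l + i))" "j3 - j1 + 2 * int k - m2 = 2 * int k"
      "j1 + j2 - j3 - 2 * int k = 2 * int (l - k)" "j1 - 2 * int k - m1 = 2 * int (i - k)"
      "j2 - 2 * int k + m2 = 2 * int (l - k)"
      using assms unfolding K'_def defs by auto
    then show "summand (int k) = (-1)^k /
        (fact k * fact (n + k - (l + i)) * fact k * fact (l - k) * fact (i - k) * fact (l - k))"
      unfolding summand_def by (simp only: hf_double nat_int power_int_of_nat)
  qed
  finally show ?thesis
    using factorial_sum_eq_racah_poly[OF assms(2), of l] unfolding K'_def defs by simp
qed

lemma w3j_diagonal:
  fixes n l i :: nat
  assumes "l \<le> n" "i \<le> n"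
  shows "w3j (int n) (2 * int l) (int n) (int n - 2 * int i) 0 (2 * int i - int n)
    = (-1) powi (int n - int l - int i) * sqrt (fact l * fact (n - l) * fact l / fact (n + l + 1))
      * real_of_int (racah_poly n l i)"
proof -
  define j1 j2 j3 m1 m2 m3 where "j1 = int n" and "j2 = 2 * int l" and "j3 = int n"
    and "m1 = int n - 2 * int i" and "m2 = (0::int)" and "m3 = 2 * int i - int n"
  note defs = j1_def j2_def j3_def m1_def m2_def m3_def
  have sum_eq: "fact i * fact (n - i) * fact l * racah_sum j1 j2 j3 m1 m2 = real_of_int (racah_poly n l i)"
    unfolding defs by (rule racah_sum_diagonal[OF assms])
  have sqrt_eq:
    "sqrt (hf (j1 - m1) * hf (j1 + m1) * hf (j2 - m2) * hf (j2 + m2) * hf (j3 - m3) * hf (j3 + m3))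
      = fact i * fact (n - i) * fact l"
  proof -
    have "j1 - m1 = 2 * int i" "j1 + m1 = 2 * int (n - i)" "j2 - m2 = 2 * int l" "j2 + m2 = 2 * int l"
      "j3 - m3 = 2 * int (n - i)" "j3 + m3 = 2 * int i"
      using assms by (auto simp: defs)
    then have "hf (j1 - m1) * hf (j1 + m1) * hf (j2 - m2) * hf (j2 + m2) * hf (j3 - m3) * hf (j3 + m3)
        = (fact i * fact (n - i) * fact l)^2"
      by (simp only: hf_double nat_int) (simp add: power2_eq_square algebra_simps)
    then show ?thesis
      by simp
  qed
  have arguments: "(j1 - j2 - m3) div 2 = int n - int l - int i"
    "j1 + j2 - j3 = 2 * int l" "j1 - j2 + j3 = 2 * int (n - l)" "- j1 + j2 + j3 = 2 * int l"
    "j1 + j2 + j3 + 2 = 2 * int (n + l + 1)"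
    using assms by (auto simp: defs)
  have "w3j (int n) (2 * int l) (int n) (int n - 2 * int i) 0 (2 * int i - int n)
      = w3j j1 j2 j3 m1 m2 m3"
    by (simp add: defs)
  also have "\<dots> = (-1) powi ((j1 - j2 - m3) div 2)
      * sqrt (hf (j1 + j2 - j3) * hf (j1 - j2 + j3) * hf (- j1 + j2 + j3) / hf (j1 + j2 + j3 + 2))
      * sqrt (hf (j1 - m1) * hf (j1 + m1) * hf (j2 - m2) * hf (j2 + m2) * hf (j3 - m3) * hf (j3 + m3))
      * racah_sum j1 j2 j3 m1 m2"
    unfolding w3j_def racah_sum_def[symmetric] by (rule if_P) (use assms in \<open>auto simp: defs\<close>)
  also have "\<dots> = (-1) powi (int n - int l - int i)
      * sqrt (fact l * fact (n - l) * fact l / fact (n + l + 1))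
      * (fact i * fact (n - i) * fact l * racah_sum j1 j2 j3 m1 m2)"
    unfolding arguments sqrt_eq hf_double nat_int by (simp only: mult_ac)
  finally show ?thesis
    unfolding sum_eq .
qed

lemma Tmat_carrier [simp]: "Tmat N l m \<in> carrier_mat N N"
  and dim_row_Tmat [simp]: "dim_row (Tmat N l m) = N"
  and dim_col_Tmat [simp]: "dim_col (Tmat N l m) = N"
  unfolding Tmat_def by simp_all

lemma Tmat_support:
  assumes "i < N" "j < N" "Tmat N l m $$ (i, j) \<noteq> 0"
  shows "int j = int i - m"
  using assms unfolding Tmat_def w3j_def by (auto split: if_splits)

definition Tmat_diag_coeff :: "nat \<Rightarrow> nat \<Rightarrow> real" where
  "Tmat_diag_coeff N l =
     (-1)^l * sqrt (2 * real l + 1) * sqrt (fact l * fact (N - 1 - l) * fact l / fact (N + l))"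

lemma Tmat_diag:
  assumes "l \<le> N - 1" "i < N"
  shows "Tmat N l 0 $$ (i, i)
    = complex_of_real (Tmat_diag_coeff N l * real_of_int (racah_poly (N - 1) l i))"
proof -
  define n where "n = N - 1"
  have n: "N = Suc n" "int N - 1 = int n" "l \<le> n" "i \<le> n"
    using assms unfolding n_def by auto
  have sign: "(-1::real) ^ (n - i) * (-1) powi (int n - int l - int i) * (-1)^l = 1"
  proof -
    have "even (int n - int l - int i) \<longleftrightarrow> (even (n - i) \<longleftrightarrow> even l)"
      using n by presburger
    then show ?thesis
      by (auto simp: power_int_minus_left minus_one_power_iff)
  qed
  have "Tmat N l 0 $$ (i, i) = complex_of_real ((-1) ^ (n - i) * sqrt (2 * real l + 1)
      * w3j (int n) (2 * int l) (int n) (int n - 2 * int i) 0 (2 * int i - int n))"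
    unfolding Tmat_def using assms by (simp add: n)
  also have "\<dots> = complex_of_real ((-1) ^ (n - i) * (-1) powi (int n - int l - int i) * (-1)^l
      * Tmat_diag_coeff N l * real_of_int (racah_poly n l i))"
    unfolding w3j_diagonal[OF n(3,4)] Tmat_diag_coeff_def by (simp add: n mult_ac)
  finally show ?thesis
    unfolding sign by (simp add: n_def)
qed

definition Tmat_1_0_scale :: "nat \<Rightarrow> real" where
  "Tmat_1_0_scale N = sqrt (3 * fact (N - 2) / fact (N + 1))"

lemma Tmat_1_0_eq_diagm:
  assumes "2 \<le> N"
  shows "Tmat N 1 0 = diagm N (\<lambda>i. complex_of_real (Tmat_1_0_scale N * (2 * real i - real (N - 1))))"
    (is "_ = ?D")
proof (rule eq_matI)
  fix i j assume ij: "i < dim_row ?D" "j < dim_col ?D"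
  have coeff: "Tmat_diag_coeff N 1 = - Tmat_1_0_scale N"
    using assms
    by (simp add: Tmat_diag_coeff_def Tmat_1_0_scale_def real_sqrt_mult[symmetric] numeral_2_eq_2)
  have poly: "real_of_int (racah_poly (N - 1) 1 i) = - (2 * real i - real (N - 1))"
    using ij racah_poly_1[of i "N - 1"] by simp
  have "Tmat N 1 0 $$ (i, i)
      = complex_of_real (Tmat_diag_coeff N 1 * real_of_int (racah_poly (N - 1) 1 i))"
    by (rule Tmat_diag) (use assms ij in auto)
  also have "\<dots> = complex_of_real (Tmat_1_0_scale N * (2 * real i - real (N - 1)))"
    unfolding coeff poly by (simp add: algebra_simps)
  finally show "Tmat N 1 0 $$ (i, j) = ?D $$ (i, j)"
    using ij Tmat_support[of i N j 1 0] by auto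
qed auto

section \<open>Frobenius pairings and the inverse Laplacian\<close>

lemma frob_eq_sum:
  assumes "A \<in> carrier_mat N N" "B \<in> carrier_mat N N"
  shows "frob A B = (\<Sum>i<N. \<Sum>p<N. cnj (A $$ (p, i)) * B $$ (p, i))"
  using assms unfolding frob_def mtrace_def ctrans_def
  by (simp add: scalar_prod_def atLeast0LessThan)

lemma frob_diagm:
  assumes "A \<in> carrier_mat N N"
  shows "frob A (diagm N d) = (\<Sum>i<N. cnj (A $$ (i, i)) * d i)"
  using assms by (simp add: frob_eq_sum if_distrib[of "\<lambda>x. _ * x"] cong: if_cong)

lemma frob_minus_right:
  assumes "A \<in> carrier_mat N N" "X \<in> carrier_mat N N" "Y \<in> carrier_mat N N"
  shows "frob A (X - Y) = frob A X - frob A Y"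
proof -
  have "X - Y \<in> carrier_mat N N"
    using assms by auto
  then show ?thesis
    using assms by (simp add: frob_eq_sum[of _ N] sum_subtractf right_diff_distrib)
qed

lemma frob_smult_right:
  assumes "A \<in> carrier_mat N N" "X \<in> carrier_mat N N"
  shows "frob A (a \<cdot>\<^sub>m X) = a * frob A X"
  using assms by (simp add: frob_eq_sum[of _ N] sum_distrib_left mult.left_commute)

lemma frob_Tmat_1_0_Tmat_1_0:
  assumes "2 \<le> N"
  shows "frob (Tmat N 1 0) (Tmat N 1 0) = 1"
proof -
  obtain m where N: "N = Suc (Suc m)"
    using assms by (metis add_2_eq_Suc le_Suc_ex)
  define n where "n = N - 1"
  have n: "n = Suc m"
    unfolding n_def N by simp
  have squares: "3 * (\<Sum>i\<le>n. (2 * real i - real n)^2) = real n * (real n + 1) * (real n + 2)"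
    using arg_cong[OF sum_centered_square[of n], of real_of_int] by simp
  have scale: "Tmat_1_0_scale N ^ 2 * (real n * (real n + 1) * (real n + 2)) = 3"
  proof -
    have "fact (N + 1) = (real n * (real n + 1) * (real n + 2)) * fact (N - 2)"
      unfolding N n by (simp add: algebra_simps)
    then have "Tmat_1_0_scale N ^ 2 = 3 / (real n * (real n + 1) * (real n + 2))"
      unfolding Tmat_1_0_scale_def by simp
    then show ?thesis
      unfolding n by simp
  qed
  have "frob (Tmat N 1 0) (Tmat N 1 0)
      = (\<Sum>i<N. complex_of_real ((Tmat_1_0_scale N * (2 * real i - real n))^2))"
    unfolding Tmat_1_0_eq_diagm[OF assms] n_def by (simp add: frob_diagm power2_eq_square)
  also have "\<dots> = complex_of_real (\<Sum>i\<le>n. Tmat_1_0_scale N ^ 2 * (2 * real i - real n)^2)"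
    unfolding of_real_sum N n lessThan_Suc_atMost by (simp add: power_mult_distrib)
  also have "\<dots> = complex_of_real (Tmat_1_0_scale N ^ 2 * (\<Sum>i\<le>n. (2 * real i - real n)^2))"
    by (simp add: sum_distrib_left)
  also have "\<dots> = 1"
  proof -
    have "3 * (Tmat_1_0_scale N ^ 2 * (\<Sum>i\<le>n. (2 * real i - real n)^2)) = 3"
      unfolding mult.left_commute[of 3] squares scale ..
    then show ?thesis
      by simp
  qed
  finally show ?thesis .
qed

lemma frob_Tmat_Tmat_1_0:
  assumes "2 \<le> N" "1 \<le> l" "l \<le> N - 1"
  shows "frob (Tmat N l m) (Tmat N 1 0) = (if l = 1 \<and> m = 0 then 1 else 0)"
proof -
  consider "m \<noteq> 0" | "m = 0" "l = 1" | "m = 0" "2 \<le> l"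
    using assms by linarith
  then show ?thesis
  proof cases
    case 1
    then have "Tmat N l m $$ (i, i) = 0" if "i < N" for i
      using Tmat_support[of i N i l m] that by auto
    then show ?thesis
      unfolding Tmat_1_0_eq_diagm[OF assms(1)] frob_diagm[OF Tmat_carrier] using 1 by simp
  next
    case 2
    then show ?thesis
      using frob_Tmat_1_0_Tmat_1_0[OF assms(1)] by simp
  next
    case 3
    define n where "n = N - 1"
    have range: "{..<N} = {..n}"
      using assms unfolding n_def by (simp add: lessThan_Suc_atMost[symmetric])
    have "frob (Tmat N l 0) (Tmat N 1 0)
        = (\<Sum>i\<le>n. complex_of_real (Tmat_diag_coeff N l * real_of_int (racah_poly n l i)
                                        * (Tmat_1_0_scale N * (2 * real i - real n))))"
      unfolding Tmat_1_0_eq_diagm[OF assms(1)] frob_diagm[OF Tmat_carrier] range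
      using assms by (intro sum.cong) (auto simp: Tmat_diag n_def)
    also have "\<dots> = complex_of_real (Tmat_diag_coeff N l * Tmat_1_0_scale N
        * real_of_int (\<Sum>i\<le>n. racah_poly n l i * (2 * int i - int n)))"
      by (simp add: sum_distrib_left mult_ac)
    finally show ?thesis
      using 3 racah_poly_orthogonal_linear by simp
  qed
qed

lemma lapinv_carrier [simp]: "lapinv N X \<in> carrier_mat N N"
  and dim_row_lapinv [simp]: "dim_row (lapinv N X) = N"
  and dim_col_lapinv [simp]: "dim_col (lapinv N X) = N"
  unfolding lapinv_def by simp_all

lemma lapinv_minus:
  assumes "X \<in> carrier_mat N N" "Y \<in> carrier_mat N N"
  shows "lapinv N (X - Y) = lapinv N X - lapinv N Y"
  by (rule eq_matI) (use assms in \<open>auto simp: lapinv_def frob_minus_right[of _ N]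
      sum_subtractf[symmetric] algebra_simps\<close>)

lemma lapinv_smult:
  assumes "X \<in> carrier_mat N N"
  shows "lapinv N (a \<cdot>\<^sub>m X) = a \<cdot>\<^sub>m lapinv N X"
  by (rule eq_matI)
    (use assms in \<open>auto simp: lapinv_def frob_smult_right[of _ N] sum_distrib_left mult_ac\<close>)

lemma lapinv_Tmat_1_0:
  assumes "2 \<le> N"
  shows "lapinv N (Tmat N 1 0) = (- 1/2) \<cdot>\<^sub>m Tmat N 1 0"
proof (rule eq_matI)
  fix i j assume "i < dim_row ((- 1/2) \<cdot>\<^sub>m Tmat N 1 0)" "j < dim_col ((- 1/2) \<cdot>\<^sub>m Tmat N 1 0)"
  then have ij: "i < N" "j < N"
    by simp_all
  have "lapinv N (Tmat N 1 0) $$ (i, j) = (\<Sum>l\<in>{1..N-1}. \<Sum>m\<in>{-int l..int l}.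
      if l = 1 then (if m = 0 then - 1/2 * Tmat N 1 0 $$ (i, j) else 0) else 0)"
    unfolding lapinv_def index_mat(1)[OF ij] prod.case
    using assms by (intro sum.cong refl) (auto simp: frob_Tmat_Tmat_1_0[simplified])
  also have "\<dots> = - 1/2 * Tmat N 1 0 $$ (i, j)"
    using assms by (simp add: sum.If_cases)
  finally show "lapinv N (Tmat N 1 0) $$ (i, j) = ((- 1/2) \<cdot>\<^sub>m Tmat N 1 0) $$ (i, j)"
    using ij by simp
qed auto

lemma frob_diag_conj:
  assumes "T \<in> carrier_mat N N" "X \<in> carrier_mat N N"
    and supp: "\<And>p q. p < N \<Longrightarrow> q < N \<Longrightarrow> T $$ (p, q) \<noteq> 0 \<Longrightarrow> int q = int p - m"
    and g: "\<And>p q. p < N \<Longrightarrow> q < N \<Longrightarrow> v p * u q = g (int q - int p)"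
  shows "frob T (diag_conj N v u X) = g (- m) * frob T X"
proof -
  have summand:
    "cnj (T $$ (p, q)) * (v p * X $$ (p, q) * u q) = g (- m) * (cnj (T $$ (p, q)) * X $$ (p, q))"
    if "p < N" "q < N" for p q
  proof (cases "T $$ (p, q) = 0")
    case False
    then have "v p * u q = g (- m)"
      using supp[OF that False] g[OF that] by simp
    then show ?thesis
      by (metis mult.commute mult.left_commute)
  qed simp
  have "frob T (diag_conj N v u X)
      = (\<Sum>i<N. \<Sum>p<N. cnj (T $$ (p, i)) * (v p * X $$ (p, i) * u i))"
    using assms by (simp add: frob_eq_sum[of _ N])
  also have "\<dots> = (\<Sum>i<N. \<Sum>p<N. g (- m) * (cnj (T $$ (p, i)) * X $$ (p, i)))"
    by (intro sum.cong refl summand; simp)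
  finally show ?thesis
    using assms by (simp add: frob_eq_sum[of _ N] sum_distrib_left)
qed

lemma lapinv_diag_conj:
  assumes "X \<in> carrier_mat N N"
    and g: "\<And>p q. p < N \<Longrightarrow> q < N \<Longrightarrow> v p * u q = g (int q - int p)"
  shows "lapinv N (diag_conj N v u X) = diag_conj N v u (lapinv N X)"
proof (rule eq_matI)
  fix i j
  assume "i < dim_row (diag_conj N v u (lapinv N X))" "j < dim_col (diag_conj N v u (lapinv N X))"
  then have ij: "i < N" "j < N"
    by simp_all
  have summand: "c * frob (Tmat N l m) (diag_conj N v u X) * Tmat N l m $$ (i, j)
      = v i * (c * frob (Tmat N l m) X * Tmat N l m $$ (i, j)) * u j" for c l m
  proof (cases "Tmat N l m $$ (i, j) = 0")
    case False
    then have "v i * u j = g (- m)"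
      using Tmat_support[OF ij False] g[OF ij] by simp
    moreover have "frob (Tmat N l m) (diag_conj N v u X) = g (- m) * frob (Tmat N l m) X"
      by (rule frob_diag_conj[where v=v and u=u and g=g, OF Tmat_carrier assms(1) _ g])
        (auto dest: Tmat_support)
    ultimately show ?thesis
      by (simp add: mult_ac)
  qed simp
  show "lapinv N (diag_conj N v u X) $$ (i, j) = diag_conj N v u (lapinv N X) $$ (i, j)"
    unfolding lapinv_def index_diag_conj[OF ij] index_mat(1)[OF ij] prod.case summand
    by (simp add: sum_distrib_left sum_distrib_right)
qed auto

section \<open>Conjugating solutions by exp (s F)\<close>

lemma brk_lapinv_minus_eigen:
  assumes "X \<in> carrier_mat N N" "i < N" "j < N"
    and eigen: "lapinv N (diagm N d) = complex_of_real \<mu> \<cdot>\<^sub>m diagm N d"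
  shows "brk N (lapinv N (X - diagm N d)) X $$ (i, j)
    = brk N (lapinv N X) X $$ (i, j)
      - complex_of_real (\<mu> * real N powr (3/2)) * (d i - d j) * X $$ (i, j)"
proof -
  have "brk N (lapinv N (X - diagm N d)) X
      = brk N (lapinv N X) X - brk N (diagm N (\<lambda>i. complex_of_real \<mu> * d i)) X"
    using assms by (simp add: lapinv_minus eigen smult_diagm brk_minus_left)
  then show ?thesis
    using assms by (simp add: index_brk_diagm algebra_simps)
qed

lemma C1_solution_carrier: "C1_solution N rhs W \<Longrightarrow> 0 \<le> t \<Longrightarrow> W t \<in> carrier_mat N N"
  unfolding C1_solution_def su_def by auto

lemma C1_solution_cong:
  assumes "C1_solution N rhs W" "\<And>t. 0 \<le> t \<Longrightarrow> W t = V t"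
  shows "C1_solution N rhs V"
proof -
  obtain W' where W: "\<forall>t\<ge>0. W t \<in> su N" and W': "\<forall>t\<ge>0. W' t \<in> carrier_mat N N"
      "\<forall>i<N. \<forall>j<N. continuous_on {0..} (\<lambda>t. W' t $$ (i, j))" "\<forall>t\<ge>0. W' t = rhs (W t)"
    and deriv: "\<forall>i<N. \<forall>j<N. \<forall>t\<ge>0.
      ((\<lambda>s. W s $$ (i, j)) has_vector_derivative (W' t $$ (i, j))) (at t within {0..})"
    using assms(1) unfolding C1_solution_def by blast
  have "((\<lambda>s. V s $$ (i, j)) has_vector_derivative (W' t $$ (i, j))) (at t within {0..})"
    if "i < N" "j < N" "0 \<le> t" for i j t
    by (rule has_vector_derivative_transform_within[OF deriv[rule_format, OF that], of 1])
      (use that assms(2) in auto)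
  then show ?thesis
    unfolding C1_solution_def using W W' assms(2)
    by (intro conjI exI[of _ W'] allI impI) simp_all
qed

definition exp_diag_conj :: "nat \<Rightarrow> (nat \<Rightarrow> complex) \<Rightarrow> real \<Rightarrow> complex mat \<Rightarrow> complex mat" where
  "exp_diag_conj N d s =
     diag_conj N (\<lambda>i. exp (complex_of_real s * d i)) (\<lambda>j. exp (- complex_of_real s * d j))"

lemma exp_diag_conj_carrier [simp]: "exp_diag_conj N d s A \<in> carrier_mat N N"
  and dim_row_exp_diag_conj [simp]: "dim_row (exp_diag_conj N d s A) = N"
  and dim_col_exp_diag_conj [simp]: "dim_col (exp_diag_conj N d s A) = N"
  unfolding exp_diag_conj_def by simp_all

lemma index_exp_diag_conj:
  "i < N \<Longrightarrow> j < N \<Longrightarrow>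
    exp_diag_conj N d s A $$ (i, j) = exp (complex_of_real s * (d i - d j)) * A $$ (i, j)"
  unfolding exp_diag_conj_def by (simp add: mult_exp_exp algebra_simps)

lemma exp_diag_conj_0: "A \<in> carrier_mat N N \<Longrightarrow> exp_diag_conj N d 0 A = A"
  by (auto intro!: eq_matI simp: index_exp_diag_conj)

lemma mexp_smult_diagm_conj:
  assumes "A \<in> carrier_mat N N"
  shows "mexp N (complex_of_real s \<cdot>\<^sub>m diagm N d) * A * mexp N (complex_of_real (- s) \<cdot>\<^sub>m diagm N d)
    = exp_diag_conj N d s A"
  using assms by (simp add: mexp_smult_diagm diagm_mult_mult_diagm exp_diag_conj_def)

lemma exp_diag_conj_su:
  assumes "A \<in> su N" "\<And>i. cnj (d i) = - d i"
  shows "exp_diag_conj N d s A \<in> su N"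
  unfolding exp_diag_conj_def by (rule diag_conj_su) (simp_all add: assms exp_cnj mult_exp_exp)

lemma exp_diag_conj_brk_lapinv:
  assumes "X \<in> carrier_mat N N" "\<And>i. d i = \<alpha> + of_nat i * \<delta>"
  shows "exp_diag_conj N d s (brk N (lapinv N X) X)
    = brk N (lapinv N (exp_diag_conj N d s X)) (exp_diag_conj N d s X)"
proof -
  define v where "v i = exp (complex_of_real s * d i)" for i
  define u where "u j = exp (- complex_of_real s * d j)" for j
  have "v p * u q = exp (- complex_of_real s * \<delta> * of_int (int q - int p))" for p q
    unfolding v_def u_def by (simp add: assms(2) mult_exp_exp algebra_simps)
  then have "lapinv N (diag_conj N v u X) = diag_conj N v u (lapinv N X)"
    by (rule lapinv_diag_conj[OF assms(1)])
  moreover have "u i * v i = 1" for i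
    unfolding v_def u_def by (simp add: mult_exp_exp)
  ultimately show ?thesis
    unfolding exp_diag_conj_def v_def[symmetric] u_def[symmetric]
    using assms(1) by (simp add: diag_conj_brk)
qed

lemma brk_lapinv_exp_diag_conj:
  assumes "X \<in> carrier_mat N N" "\<And>i. d i = \<alpha> + of_nat i * \<delta>"
    and eigen: "lapinv N (diagm N d) = complex_of_real \<mu> \<cdot>\<^sub>m diagm N d"
  shows "brk N (lapinv N (exp_diag_conj N d s X)) (exp_diag_conj N d s X)
    = mat N N (\<lambda>(i, j). exp (complex_of_real s * (d i - d j))
        * (brk N (lapinv N (X - diagm N d)) X $$ (i, j)
           + complex_of_real (\<mu> * real N powr (3/2)) * (d i - d j) * X $$ (i, j)))"
    (is "?lhs = ?M")
proof (rule eq_matI)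
  fix i j assume "i < dim_row ?M" "j < dim_col ?M"
  then have ij: "i < N" "j < N"
    by simp_all
  then show "?lhs $$ (i, j) = ?M $$ (i, j)"
    unfolding exp_diag_conj_brk_lapinv[OF assms(1,2), symmetric]
    using brk_lapinv_minus_eigen[OF assms(1) ij eigen] by (simp add: index_exp_diag_conj)
qed (simp_all add: exp_diag_conj_def)

lemma has_vector_derivative_index_exp_diag_conj:
  assumes "((\<lambda>s. W s $$ (i, j)) has_vector_derivative w) (at t within S)" "i < N" "j < N"
  shows "((\<lambda>s. exp_diag_conj N d (r * s) (W s) $$ (i, j)) has_vector_derivative
      exp (complex_of_real (r * t) * (d i - d j)) * (w + complex_of_real r * (d i - d j) * W t $$ (i, j)))
      (at t within S)"
  using has_vector_derivative_mult[OF exp_scaleR_has_vector_derivative_right assms(1),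
      of "complex_of_real r * (d i - d j)"] assms(2,3)
  by (simp add: index_exp_diag_conj scaleR_conv_of_real algebra_simps)

lemma C1_solution_exp_diag_conj:
  fixes d :: "nat \<Rightarrow> complex" and \<mu> :: real
  assumes affine: "\<And>i. d i = \<alpha> + of_nat i * \<delta>"
    and imaginary: "\<And>i. cnj (d i) = - d i"
    and eigen: "lapinv N (diagm N d) = complex_of_real \<mu> \<cdot>\<^sub>m diagm N d"
    and sol: "C1_solution N (\<lambda>X. brk N (lapinv N (X - diagm N d)) X) W"
  shows "C1_solution N (\<lambda>X. brk N (lapinv N X) X)
      (\<lambda>t. exp_diag_conj N d (\<mu> * real N powr (3/2) * t) (W t))"
proof -
  define r where "r = \<mu> * real N powr (3/2)"
  define \<beta> where "\<beta> i j = complex_of_real r * (d i - d j)" for i j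
  obtain W' where Wsu: "\<forall>t\<ge>0. W t \<in> su N"
    and W'cont: "\<forall>i<N. \<forall>j<N. continuous_on {0..} (\<lambda>t. W' t $$ (i, j))"
    and W'eq: "\<forall>t\<ge>0. W' t = brk N (lapinv N (W t - diagm N d)) (W t)"
    and deriv: "\<forall>i<N. \<forall>j<N. \<forall>t\<ge>0.
      ((\<lambda>s. W s $$ (i, j)) has_vector_derivative (W' t $$ (i, j))) (at t within {0..})"
    using sol unfolding C1_solution_def by blast
  define G where "G t = exp_diag_conj N d (r * t) (W t)" for t
  define G' where "G' t = mat N N (\<lambda>(i, j).
      exp (complex_of_real (r * t) * (d i - d j)) * (W' t $$ (i, j) + \<beta> i j * W t $$ (i, j)))" for t
  have su: "G t \<in> su N" if "0 \<le> t" for t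
    unfolding G_def using Wsu that imaginary by (simp add: exp_diag_conj_su)
  have deriv_G: "((\<lambda>s. G s $$ (i, j)) has_vector_derivative G' t $$ (i, j)) (at t within {0..})"
    if "i < N" "j < N" "0 \<le> t" for i j t
    unfolding G_def G'_def \<beta>_def
    using has_vector_derivative_index_exp_diag_conj[OF deriv[rule_format, OF that] that(1,2)] that
    by simp
  have cont_G': "continuous_on {0..} (\<lambda>t. G' t $$ (i, j))" if "i < N" "j < N" for i j
  proof -
    have "continuous_on {0..} (\<lambda>t. W t $$ (i, j))"
      by (rule continuous_on_vector_derivative) (use deriv that in auto)
    then show ?thesis
      unfolding G'_def using W'cont that by (auto intro!: continuous_intros)
  qed
  have evolution: "G' t = brk N (lapinv N (G t)) (G t)" if "0 \<le> t" for t
    using W'eq that unfolding G_def G'_def \<beta>_def r_def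
    by (simp add: brk_lapinv_exp_diag_conj[OF C1_solution_carrier[OF sol that] affine eigen])
  have "C1_solution N (\<lambda>X. brk N (lapinv N X) X) G"
    unfolding C1_solution_def
  proof (intro conjI exI[of _ G'] allI impI)
    show "G' t \<in> carrier_mat N N" for t
      by (simp add: G'_def)
  qed (auto intro: su deriv_G cont_G' evolution)
  then show ?thesis
    unfolding G_def r_def .
qed

theorem mainTheorem2:
  fixes N :: nat and \<Omega> :: real and W :: "real \<Rightarrow> complex mat"
  assumes "N \<ge> 2" and "\<Omega> > 0"
    and "C1_solution N (\<lambda>X. brk N (lapinv N (X - (2 * complex_of_real \<Omega> * \<i>) \<cdot>\<^sub>m Tmat N 1 0)) X) W"
  shows "C1_solution N (\<lambda>X. brk N (lapinv N X) X)
           (\<lambda>t. mexp N (complex_of_real (- (1/2) * real N powr (3/2) * t) \<cdot>\<^sub>m ((2 * complex_of_real \<Omega> * \<i>) \<cdot>\<^sub>m Tmat N 1 0))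
                * W t
                * mexp N (complex_of_real ((1/2) * real N powr (3/2) * t) \<cdot>\<^sub>m ((2 * complex_of_real \<Omega> * \<i>) \<cdot>\<^sub>m Tmat N 1 0)))
       \<and> mexp N (complex_of_real (- (1/2) * real N powr (3/2) * 0) \<cdot>\<^sub>m ((2 * complex_of_real \<Omega> * \<i>) \<cdot>\<^sub>m Tmat N 1 0))
                * W 0
                * mexp N (complex_of_real ((1/2) * real N powr (3/2) * 0) \<cdot>\<^sub>m ((2 * complex_of_real \<Omega> * \<i>) \<cdot>\<^sub>m Tmat N 1 0)) = W 0"
proof -
  define c where "c = 2 * complex_of_real \<Omega> * \<i>"
  define d where "d i = c * complex_of_real (Tmat_1_0_scale N * (2 * real i - real (N - 1)))" for i
  have F: "c \<cdot>\<^sub>m Tmat N 1 0 = diagm N d"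
    unfolding d_def Tmat_1_0_eq_diagm[OF assms(1)] smult_diagm ..
  have affine: "d i = - c * Tmat_1_0_scale N * real (N - 1) + of_nat i * (2 * c * Tmat_1_0_scale N)" for i
    unfolding d_def by (simp add: algebra_simps)
  have imaginary: "cnj (d i) = - d i" for i
    unfolding d_def c_def by simp
  have eigen: "lapinv N (diagm N d) = complex_of_real (- (1/2)) \<cdot>\<^sub>m diagm N d"
    unfolding F[symmetric] lapinv_smult[OF Tmat_carrier] lapinv_Tmat_1_0[OF assms(1)]
    by (auto intro!: eq_matI)
  have rotated: "mexp N (complex_of_real (- (1/2) * real N powr (3/2) * t) \<cdot>\<^sub>m (c \<cdot>\<^sub>m Tmat N 1 0)) * W t
      * mexp N (complex_of_real ((1/2) * real N powr (3/2) * t) \<cdot>\<^sub>m (c \<cdot>\<^sub>m Tmat N 1 0))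
    = exp_diag_conj N d (- (1/2) * real N powr (3/2) * t) (W t)" if "0 \<le> t" for t
    using mexp_smult_diagm_conj[OF C1_solution_carrier[OF assms(3) that],
        of "- (1/2) * real N powr (3/2) * t" d]
    unfolding c_def F[unfolded c_def] by simp
  have "C1_solution N (\<lambda>X. brk N (lapinv N X) X)
      (\<lambda>t. exp_diag_conj N d (- (1/2) * real N powr (3/2) * t) (W t))"
    using C1_solution_exp_diag_conj[OF affine imaginary eigen] assms(3) unfolding c_def[symmetric] F .
  then show ?thesis
    unfolding c_def[symmetric]
    using rotated rotated[of 0] exp_diag_conj_0[OF C1_solution_carrier[OF assms(3), of 0]]
    by (auto intro: C1_solution_cong)
qed

end
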